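(* Let $k\ge 4$, $n=2k-1$, $\eta=(\eta_1<\dots<\eta_l)\in\mathbb{D}_k\setminus\{(3,k-3)\}$, and let $Y_{2\eta^*}$ be the Young diagram whose main diagonal consists of exactly the cells $c_{1,1},\dots,c_{l+1,l+1}$ and which satisfies $h_{1,1}=2n-4$, $h_{i,i}=2\eta_{l-(i-2)}$ for $2\le i\le l+1$, and $a(c_{i,i})=l(c_{i,i})+1$ for $1\le i\le l+1$. Let $\lambda$ be the partition whose parts are the hook lengths of the cells of the first column of $Y_{2\eta^*}$. Then $\lambda$ is a partition of $T_n=n(n+1)/2$.
   Context: $\mathbb{D}_N$ is the set of partitions of $N$ into distinct parts, i.e. sequences $(\lambda_1<\dots<\lambda_t)$ of positive integers with sum $N$ and $t\ge 2$. Young diagrams are in English convention: rows top to bottom, columns left to right, $c_{i,j}$ the cell in row $i$, column $j$; arm $a(c_{i,j})$ = number of cells to its right in its row, leg $l(c_{i,j})$ = number of cells below it in its column, hook length $h_{i,j}=a+l+1$. (The hook lengths of the first-column cells of a Young diagram are pairwise distinct; the resulting partition is the complement in $\mathbb{N}_0$ of the numerical set corresponding to the diagram under the Keith–Nath transformation.) *)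

theory Defs
  imports Main
begin

definition distinct_partition :: "nat \<Rightarrow> nat list \<Rightarrow> bool" where
  "distinct_partition N eta \<longleftrightarrow> sorted_wrt (<) eta \<and> (\<forall>x\<in>set eta. 0 < x)
      \<and> sum_list eta = N \<and> length eta \<ge> 2"

text \<open>A Young diagram (English convention) is given by its list of row lengths,
  top to bottom: weakly decreasing positive integers. Rows and columns are 1-indexed.\<close>
definition young :: "nat list \<Rightarrow> bool" where
  "young Y \<longleftrightarrow> sorted_wrt (\<ge>) Y \<and> (\<forall>r\<in>set Y. 0 < r)"

definition cell :: "nat list \<Rightarrow> nat \<Rightarrow> nat \<Rightarrow> bool" where
  "cell Y i j \<longleftrightarrow> 1 \<le> i \<and> i \<le> length Y \<and> 1 \<le> j \<and> j \<le> Y ! (i - 1)"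

definition arm :: "nat list \<Rightarrow> nat \<Rightarrow> nat \<Rightarrow> nat" where
  "arm Y i j = card {j'. j < j' \<and> cell Y i j'}"

definition leg :: "nat list \<Rightarrow> nat \<Rightarrow> nat \<Rightarrow> nat" where
  "leg Y i j = card {i'. i < i' \<and> cell Y i' j}"

definition hook :: "nat list \<Rightarrow> nat \<Rightarrow> nat \<Rightarrow> nat" where
  "hook Y i j = arm Y i j + leg Y i j + 1"

definition first_col_hooks :: "nat list \<Rightarrow> nat list" where
  "first_col_hooks Y = map (\<lambda>i. hook Y i 1) [1..<length Y + 1]"

end

theory Submission
  imports Defs
begin

text \<open>Cutting the diagram into its diagonal hooks gives
  \<open>|Y| = \<Sum>\<^sub>i h\<^sub>i\<^sub>,\<^sub>i\<close>, so here \<open>|Y| = (2n - 4) + 2k = 3n - 3\<close>.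
  Since \<open>h\<^sub>i\<^sub>,\<^sub>1 = Y\<^sub>i + (r - i)\<close> for a diagram with \<open>r\<close> rows, the first-column
  hooks sum to \<open>|Y| + r(r - 1)/2\<close>. Finally \<open>a(c\<^sub>1\<^sub>,\<^sub>1) = l(c\<^sub>1\<^sub>,\<^sub>1) + 1\<close> gives
  \<open>h\<^sub>1\<^sub>,\<^sub>1 = 2r\<close>, hence \<open>r = n - 2\<close>, and
  \<open>3n - 3 + (n - 2)(n - 3)/2 = n(n + 1)/2\<close>.
  Only the sum of \<open>\<eta>\<close> matters.\<close>

lemma sum_list_eq_sum_nth_from_1: "sum_list xs = (\<Sum>i\<in>{1..length xs}. xs ! (i - 1))"
proof -
  have "(\<Sum>i\<in>{1..length xs}. xs ! (i - 1)) = (\<Sum>i<length xs. xs ! i)"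
    by (rule sum.reindex_bij_witness[where i = Suc and j = "\<lambda>i. i - 1"]) auto
  then show ?thesis by (simp add: sum_list_sum_nth atLeast0LessThan)
qed

lemma young_nth_antimono:
  assumes "young Y" "i \<le> i'" "i' < length Y"
  shows "Y ! i' \<le> Y ! i"
  using assms sorted_wrt_nth_less[of "(\<ge>)" Y i i'] unfolding young_def
  by (cases "i = i'") auto

lemma young_nth_pos:
  assumes "young Y" "i < length Y"
  shows "0 < Y ! i"
  using assms unfolding young_def by auto

lemma cell_downward_closed:
  assumes "young Y" "cell Y i j" "1 \<le> i'" "i' \<le> i" "1 \<le> j'" "j' \<le> j"
  shows "cell Y i' j'"
proof -
  have "i \<le> length Y" "j \<le> Y ! (i - 1)" using assms(2) by (simp_all add: cell_def)
  moreover have "Y ! (i - 1) \<le> Y ! (i' - 1)"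
    using young_nth_antimono[OF assms(1), of "i' - 1" "i - 1"] assms calculation by simp
  ultimately show ?thesis using assms unfolding cell_def by auto
qed

lemma cells_eq_Sigma: "{(i, j). cell Y i j} = (SIGMA i:{1..length Y}. {1..Y ! (i - 1)})"
  unfolding cell_def by auto

lemma finite_cells: "finite {(i, j). cell Y i j}"
  unfolding cells_eq_Sigma by auto

lemma card_cells: "card {(i, j). cell Y i j} = sum_list Y"
  unfolding cells_eq_Sigma sum_list_eq_sum_nth_from_1 by (subst card_SigmaI) auto

definition diagonal_hook :: "nat list \<Rightarrow> nat \<Rightarrow> (nat \<times> nat) set" where
  "diagonal_hook Y m = {(i, j). cell Y i j \<and> min i j = m}"

lemma card_diagonal_hook:
  assumes "cell Y m m"
  shows "card (diagonal_hook Y m) = hook Y m m"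
proof -
  let ?A = "{j. m < j \<and> cell Y m j}" and ?B = "{i. m < i \<and> cell Y i m}"
  have "finite ?A" by (rule finite_subset[of _ "{..Y ! (m - 1)}"]) (auto simp: cell_def)
  moreover have "finite ?B" by (rule finite_subset[of _ "{..length Y}"]) (auto simp: cell_def)
  moreover have "diagonal_hook Y m = insert (m, m) ({m} \<times> ?A \<union> ?B \<times> {m})"
    using assms unfolding diagonal_hook_def by auto
  moreover have "{m} \<times> ?A \<inter> ?B \<times> {m} = {}" by auto
  ultimately have "card (diagonal_hook Y m) = 1 + card ({m} \<times> ?A) + card (?B \<times> {m})"
    by (simp add: card_Un_disjoint)
  then show ?thesis
    unfolding hook_def arm_def leg_def by (simp add: card_cartesian_product)
qed

lemma cells_eq_UN_diagonal_hooks: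
  assumes "young Y" "\<forall>i\<ge>1. cell Y i i \<longleftrightarrow> i \<le> d"
  shows "{(i, j). cell Y i j} = (\<Union>m\<in>{1..d}. diagonal_hook Y m)"
proof
  show "{(i, j). cell Y i j} \<subseteq> (\<Union>m\<in>{1..d}. diagonal_hook Y m)"
  proof clarify
    fix i j assume ij: "cell Y i j"
    then have "cell Y (min i j) (min i j)"
      using cell_downward_closed[OF assms(1) ij] by (simp add: cell_def min_def)
    moreover have "1 \<le> min i j" using ij by (simp add: cell_def)
    ultimately have "min i j \<in> {1..d}" using assms(2) by simp
    then show "(i, j) \<in> (\<Union>m\<in>{1..d}. diagonal_hook Y m)"
      using ij unfolding diagonal_hook_def by blast
  qed
qed (auto simp: diagonal_hook_def)

lemma sum_list_eq_sum_diagonal_hooks: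
  assumes "young Y" "\<forall>i\<ge>1. cell Y i i \<longleftrightarrow> i \<le> d"
  shows "sum_list Y = (\<Sum>m\<in>{1..d}. hook Y m m)"
proof -
  have "sum_list Y = card (\<Union>m\<in>{1..d}. diagonal_hook Y m)"
    using card_cells cells_eq_UN_diagonal_hooks[OF assms] by metis
  also have "\<dots> = (\<Sum>m\<in>{1..d}. card (diagonal_hook Y m))"
    by (rule card_UN_disjoint)
      (auto intro: finite_subset[OF _ finite_cells] simp: diagonal_hook_def)
  also have "\<dots> = (\<Sum>m\<in>{1..d}. hook Y m m)"
    using assms(2) card_diagonal_hook by (intro sum.cong) auto
  finally show ?thesis .
qed

lemma arm_eq:
  assumes "cell Y i j"
  shows "arm Y i j = Y ! (i - 1) - j"
proof -
  have "{j'. j < j' \<and> cell Y i j'} = {j<..Y ! (i - 1)}"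
    using assms unfolding cell_def by auto
  then show ?thesis unfolding arm_def by simp
qed

lemma leg_first_col:
  assumes "young Y" "1 \<le> i"
  shows "leg Y i 1 = length Y - i"
proof -
  have "{i'. i < i' \<and> cell Y i' 1} = {i<..length Y}"
    using assms young_nth_pos[OF assms(1), of "_ - 1"]
    by (force simp: cell_def Suc_le_eq)
  then show ?thesis unfolding leg_def by simp
qed

lemma hook_first_col:
  assumes "young Y" "1 \<le> i" "i \<le> length Y"
  shows "hook Y i 1 = Y ! (i - 1) + (length Y - i)"
proof -
  have "0 < Y ! (i - 1)" using young_nth_pos[OF assms(1), of "i - 1"] assms by simp
  then have "cell Y i 1" using assms by (simp add: cell_def)
  then show ?thesis
    using \<open>0 < Y ! (i - 1)\<close> leg_first_col[OF assms(1,2)] unfolding hook_def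
    by (simp add: arm_eq)
qed

lemma hook_first_cell:
  assumes "young Y" "cell Y 1 1" "arm Y 1 1 = leg Y 1 1 + 1"
  shows "hook Y 1 1 = 2 * length Y"
  using assms leg_first_col[OF assms(1), of 1] unfolding hook_def cell_def by linarith

lemma double_sum_rev_interval: "2 * (\<Sum>i\<in>{1..r}. r - i) = r * (r - 1 :: nat)"
proof (cases r)
  case (Suc m)
  have "(\<Sum>i\<in>{1..Suc m}. Suc m - i) = (\<Sum>i\<in>{0..m}. i)"
    by (rule sum.reindex_bij_witness[where i = "\<lambda>i. Suc m - i" and j = "\<lambda>i. Suc m - i"]) auto
  then show ?thesis using double_gauss_sum[of m, where 'a = nat] Suc by simp
qed simp

lemma sum_first_col_hooks:
  assumes "young Y"
  shows "2 * sum_list (first_col_hooks Y) = 2 * sum_list Y + length Y * (length Y - 1)"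
proof -
  let ?r = "length Y"
  have "sum_list (first_col_hooks Y) = (\<Sum>i\<in>{1..?r}. Y ! (i - 1) + (?r - i))"
    unfolding first_col_hooks_def interv_sum_list_conv_sum_set_nat
    using hook_first_col[OF assms] by (intro sum.cong) auto
  also have "\<dots> = (\<Sum>i\<in>{1..?r}. Y ! (i - 1)) + (\<Sum>i\<in>{1..?r}. ?r - i)"
    by (rule sum.distrib)
  finally show ?thesis
    using double_sum_rev_interval[of ?r] sum_list_eq_sum_nth_from_1[of Y] by simp
qed

theorem proposition3p21:
  fixes k n :: nat and eta Y :: "nat list"
  assumes "k \<ge> 4" and "n = 2 * k - 1"
    and "distinct_partition k eta" and "eta \<noteq> [3, k - 3]"
    and "young Y"
    and "\<forall>i\<ge>1. cell Y i i \<longleftrightarrow> i \<le> length eta + 1"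
    and "hook Y 1 1 = 2 * n - 4"
    and "\<forall>i. 2 \<le> i \<and> i \<le> length eta + 1 \<longrightarrow>
           hook Y i i = 2 * eta ! (length eta - (i - 2) - 1)"
    and "\<forall>i. 1 \<le> i \<and> i \<le> length eta + 1 \<longrightarrow> arm Y i i = leg Y i i + 1"
  shows "sum_list (first_col_hooks Y) = n * (n + 1) div 2
         \<and> (\<forall>x\<in>set (first_col_hooks Y). 0 < x)"
proof
  show "\<forall>x\<in>set (first_col_hooks Y). 0 < x" unfolding first_col_hooks_def hook_def by auto
  define l where "l = length eta"
  have rows: "length Y = n - 2"
    using hook_first_cell[OF assms(5)] assms(6,7,9) by simp
  obtain m where k: "k = m + 4" using assms(1) le_Suc_ex by (metis add.commute)
  have "(\<Sum>m\<in>{2..l + 1}. hook Y m m) = (\<Sum>m\<in>{2..l + 1}. 2 * eta ! (l - (m - 2) - 1))"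
    using assms(8) unfolding l_def by (intro sum.cong) auto
  also have "\<dots> = (\<Sum>j<l. 2 * eta ! j)"
    by (rule sum.reindex_bij_witness[where i = "\<lambda>j. l + 1 - j" and j = "\<lambda>m. l - (m - 2) - 1"]) auto
  also have "\<dots> = 2 * k"
    using assms(3) unfolding distinct_partition_def l_def
    by (simp add: sum_list_sum_nth atLeast0LessThan sum_distrib_left[symmetric])
  moreover have "{1..l + 1} = insert 1 {2..l + 1}" by auto
  ultimately have "sum_list Y = 2 * n - 4 + 2 * k"
    using sum_list_eq_sum_diagonal_hooks[OF assms(5,6)] assms(7) by (simp add: l_def)
  then have "2 * sum_list (first_col_hooks Y) = n * (n + 1)"
    using sum_first_col_hooks[OF assms(5)] rows assms(2) k by (simp add: algebra_simps)
  then show "sum_list (first_col_hooks Y) = n * (n + 1) div 2" by simp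
qed

end
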